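(* For every $n\ge1$ there is a bijection from $\mathcal{S}_n(0011,0021)$ onto the set of Dyck paths of semilength $n$ which sends an ascent sequence with exactly $k$ zeros to a Dyck path with exactly $k$ returns (equivalently, $k$ components). In particular, for all $n\ge1$ and $k\ge1$, the number of sequences in $\mathcal{S}_n(0011,0021)$ having exactly $k$ entries equal to $0$ equals the number of Dyck paths of semilength $n$ with exactly $k$ returns, and $S_n(0011,0021)=C_n$.
   Context: An ascent sequence of length $n$ is a sequence $x_1\cdots x_n$ of non-negative integers with $x_1=0$ and $x_i\le \mathrm{asc}(x_1\cdots x_{i-1})+1$ for $1<i\le n$, where $\mathrm{asc}$ counts indices $j$ with $x_j<x_{j+1}$. A sequence contains a pattern $\tau$ if some subsequence is order-isomorphic to $\tau$ (equal letters to equal letters); otherwise it avoids $\tau$; $\mathcal{S}_n(T)$ is the set of ascent sequences of length $n$ avoiding all patterns in $T$. A Dyck path of semilength $n$ is a lattice path from $(0,0)$ to $(2n,0)$ with steps $U=(1,1)$ and $D=(1,-1)$ never going below the $x$-axis. A return is a non-initial vertex on the $x$-axis; the returns split a nonempty Dyck path into components (each a nonempty Dyck path touching the axis only at its endpoints), so the number of components equals the number of returns. $C_n=\frac1{n+1}\binom{2n}n$. *)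

theory Defs
  imports Main "HOL-Library.Sublist"
begin

text \<open>Ascent sequences are lists of naturals; Dyck paths are lists of booleans
  (True = up step U, False = down step D).\<close>

definition asc :: "nat list \<Rightarrow> nat" where
  "asc xs = card {j. Suc j < length xs \<and> xs ! j < xs ! Suc j}"

definition ascent_seq :: "nat list \<Rightarrow> bool" where
  "ascent_seq xs \<longleftrightarrow> xs \<noteq> [] \<and> xs ! 0 = 0 \<and>
     (\<forall>i. 0 < i \<and> i < length xs \<longrightarrow> xs ! i \<le> asc (take i xs) + 1)"

definition order_iso :: "nat list \<Rightarrow> nat list \<Rightarrow> bool" where
  "order_iso ys ts \<longleftrightarrow> length ys = length ts \<and>
     (\<forall>i<length ys. \<forall>j<length ys.
        (ys ! i < ys ! j \<longleftrightarrow> ts ! i < ts ! j) \<and> (ys ! i = ys ! j \<longleftrightarrow> ts ! i = ts ! j))"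

definition contains :: "nat list \<Rightarrow> nat list \<Rightarrow> bool" where
  "contains xs \<tau> \<longleftrightarrow> (\<exists>ys. subseq ys xs \<and> order_iso ys \<tau>)"

definition avoids_all :: "nat list \<Rightarrow> nat list set \<Rightarrow> bool" where
  "avoids_all xs T \<longleftrightarrow> (\<forall>\<tau>\<in>T. \<not> contains xs \<tau>)"

definition S :: "nat \<Rightarrow> nat list set \<Rightarrow> nat list set" where
  "S n T = {xs. length xs = n \<and> ascent_seq xs \<and> avoids_all xs T}"

definition height :: "bool list \<Rightarrow> int" where
  "height p = int (count_list p True) - int (count_list p False)"

definition dyck :: "nat \<Rightarrow> bool list set" where
  "dyck n = {p. length p = 2 * n \<and> height p = 0 \<and> (\<forall>i\<le>length p. height (take i p) \<ge> 0)}"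

definition returns :: "bool list \<Rightarrow> nat" where
  "returns p = card {i. 1 \<le> i \<and> i \<le> length p \<and> height (take i p) = 0}"

definition catalan :: "nat \<Rightarrow> nat" where
  "catalan n = ((2 * n) choose n) div (n + 1)"

end

theory Submission
  imports Defs
begin

text \<open>A letter v can be appended to an ascent sequence x avoiding 0011 and 0021 iff
  v \<le> asc x + 1 and no x_i = x_j < v \<le> x_l occurs with i < j < l. Appending letters turns these sequences into a generating tree; label a node by its
  number of children. If x has at least two zeros, appending 0 adds a zero and keeps the label,
  while the positive admissible letters give children with labels 2, 3, ..., label x. A sequence
  with a single zero is 0 followed by a shifted sequence, and shifting raises the label by one.
  Hence the number of sequences of length n with k zeros and label at least c obeys the recursion
  of the Catalan triangle and equals ballot n (k + c - 2). By the first-return decomposition,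
  ballot n k also counts the Dyck paths of semilength n with k returns. So zeros and returns are
  equidistributed, bijections between corresponding fibres glue to the required bijection, and
  summing over k gives the Catalan number.\<close>

lemma card_with_at_least_greater:
  fixes B :: "nat set"
  assumes "finite B"
  shows "card {v\<in>B. m \<le> card {u\<in>B. v < u}} = card B - m"
  using assms
proof (induction B rule: finite_linorder_min_induct)
  case (insert b B)
  let ?S = "\<lambda>B. {v\<in>B. m \<le> card {u\<in>B. v < u}}"
  have "b \<notin> B" using insert.hyps(2) by auto
  have b_above: "{u\<in>insert b B. b < u} = B" using insert.hyps(2) by auto
  have "v \<in> ?S (insert b B) \<longleftrightarrow> v \<in> (if m \<le> card B then insert b (?S B) else ?S B)" for v
  proof (cases "v = b")
    case False
    show ?thesis
    proof (cases "v \<in> B")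
      case True
      then have "{u\<in>insert b B. v < u} = {u\<in>B. v < u}" using insert.hyps(2) by auto
      with False True show ?thesis by simp
    qed (use False in simp)
  qed (use b_above \<open>b \<notin> B\<close> in auto)
  then have "?S (insert b B) = (if m \<le> card B then insert b (?S B) else ?S B)" by blast
  with insert \<open>b \<notin> B\<close> show ?case by (simp add: Suc_diff_le)
qed simp

lemma card_eq_sum_card_fibres:
  assumes "finite A" "finite K" "f ` A \<subseteq> K"
  shows "card A = (\<Sum>k\<in>K. card {a\<in>A. f a = k})"
proof -
  have "(\<Sum>k\<in>K. \<Sum>a\<in>{a\<in>A. f a = k}. 1) = (\<Sum>a\<in>A. 1 :: nat)"
    by (rule sum.group[OF assms])
  then show ?thesis by simp
qed

lemma sum_diff_eq_sum_card:
  fixes f :: "'a \<Rightarrow> nat"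
  assumes "finite X" "\<forall>x\<in>X. f x < c + N"
  shows "(\<Sum>x\<in>X. f x + 1 - c) = (\<Sum>i<N. card {x\<in>X. c + i \<le> f x})"
proof -
  have "f x + 1 - c = (\<Sum>i<N. of_bool (c + i \<le> f x))" if "x \<in> X" for x
  proof -
    have "{..<N} \<inter> {i. c + i \<le> f x} = {..<f x + 1 - c}" using assms(2) that by auto
    then show ?thesis by simp
  qed
  then have "(\<Sum>x\<in>X. f x + 1 - c) = (\<Sum>x\<in>X. \<Sum>i<N. of_bool (c + i \<le> f x))"
    by (rule sum.cong[OF refl])
  also have "\<dots> = (\<Sum>i<N. \<Sum>x\<in>X. of_bool (c + i \<le> f x))" by (rule sum.swap)
  also have "\<dots> = (\<Sum>i<N. card {x\<in>X. c + i \<le> f x})"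
    using assms(1) by (simp add: Collect_conj_eq Int_commute)
  finally show ?thesis .
qed

lemma ex_bij_betw_preserving_statistic:
  assumes "finite A" "finite B" "\<And>k. card {a\<in>A. f a = k} = card {b\<in>B. g b = k}"
  shows "\<exists>h. bij_betw h A B \<and> (\<forall>a\<in>A. g (h a) = f a)"
proof -
  have "\<exists>h. bij_betw h {a\<in>A. f a = k} {b\<in>B. g b = k}" for k
    using assms by (intro finite_same_card_bij) simp_all
  then obtain H where H: "\<And>k. bij_betw (H k) {a\<in>A. f a = k} {b\<in>B. g b = k}" by metis
  define h where "h a = H (f a) a" for a
  have maps: "h a \<in> B \<and> g (h a) = f a" if "a \<in> A" for a
    using bij_betw_apply[OF H, of a "f a"] that unfolding h_def by simp
  have "inj_on h A"
  proof (rule inj_onI)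
    fix a a' assume "a \<in> A" "a' \<in> A" "h a = h a'"
    moreover then have "f a = f a'" using maps by metis
    ultimately show "a = a'"
      using bij_betw_imp_inj_on[OF H, of "f a"] unfolding h_def by (auto dest: inj_onD)
  qed
  moreover have "B \<subseteq> h ` A"
  proof
    fix b assume "b \<in> B"
    then obtain a where "a \<in> A" "f a = g b" "b = H (g b) a"
      using bij_betw_imp_surj_on[OF H, of "g b"] by force
    then have "b = h a" unfolding h_def by simp
    with \<open>a \<in> A\<close> show "b \<in> h ` A" by blast
  qed
  ultimately show ?thesis using maps unfolding bij_betw_def by blast
qed

section \<open>The Catalan triangle\<close>

text \<open>The Catalan triangle: ballot n k = k / (2n - k) * (2n - k choose n) for 0 < k \<le> n.\<close>

fun ballot :: "nat \<Rightarrow> nat \<Rightarrow> nat" where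
  "ballot 0 k = (if k = 0 then 1 else 0)"
| "ballot (Suc n) 0 = 0"
| "ballot (Suc n) (Suc k) = (\<Sum>i<Suc n. ballot n (k + i))"

lemma ballot_eq_0: "n < k \<Longrightarrow> ballot n k = 0"
proof (induction n arbitrary: k)
  case (Suc n)
  then show ?case by (cases k) auto
qed simp

lemma sum_ballot_tail:
  assumes "n < N"
  shows "(\<Sum>i<N. ballot n (k + i)) = ballot (Suc n) (Suc k)"
  using Suc_leI[OF assms]
proof (induction N rule: dec_induct)
  case (step N)
  then show ?case by (simp add: ballot_eq_0)
qed simp

lemma ballot_Suc_Suc_split: "ballot (Suc n) (Suc k) = ballot n k + ballot (Suc n) (Suc (Suc k))"
proof -
  have "ballot (Suc n) (Suc k) = ballot n k + (\<Sum>i<n. ballot n (Suc k + i))"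
    by (simp only: ballot.simps sum.lessThan_Suc_shift) simp
  also have "(\<Sum>i<n. ballot n (Suc k + i)) = ballot (Suc n) (Suc (Suc k))"
    by (simp add: ballot_eq_0)
  finally show ?thesis .
qed

declare ballot.simps(3) [simp del]

lemma ballot_diag: "ballot n n = 1"
proof (induction n)
  case (Suc n)
  have "ballot (Suc n) (Suc (Suc n)) = 0" by (rule ballot_eq_0) simp
  with Suc show ?case by (subst ballot_Suc_Suc_split) simp
qed simp

text \<open>The ballot formula (k + 2a choose a) - (k + 2a choose a - 1), with the subtracted term
  written as (k + 2a choose k + a + 1) so that no subtraction occurs.\<close>

lemma ballot_closed_form:
  "ballot (Suc (k + a)) (Suc k) + ((k + 2 * a) choose Suc (k + a)) = (k + 2 * a) choose a"
proof (induction a arbitrary: k)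
  case 0
  then show ?case by (simp add: ballot_diag)
next
  case (Suc a)
  note outer_IH = Suc.IH
  show ?case
  proof (induction k)
    case 0
    have "ballot (Suc (Suc a)) (Suc 0) = ballot (Suc (Suc a)) (Suc (Suc 0))"
      using ballot_Suc_Suc_split[of "Suc a" 0] by simp
    with outer_IH[of 1] show ?case by (simp add: numeral_2_eq_2)
  next
    case (Suc k)
    have "ballot (Suc (Suc k + Suc a)) (Suc (Suc k))
        = ballot (Suc (k + Suc a)) (Suc k) + ballot (Suc (Suc (Suc k) + a)) (Suc (Suc (Suc k)))"
      by (subst ballot_Suc_Suc_split) simp
    with Suc.IH outer_IH[of "Suc (Suc k)"] show ?case by simp
  qed
qed

lemma ballot_Suc_1_eq_catalan: "ballot (Suc n) 1 = catalan n"
proof -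
  have closed: "ballot (Suc n) 1 + ((2 * n) choose Suc n) = (2 * n) choose n"
    using ballot_closed_form[of 0 n] by simp
  have absorb: "Suc n * ((2 * n) choose Suc n) = n * ((2 * n) choose n)"
  proof (cases n)
    case (Suc m)
    then have "2 * n = Suc (n + m)" by simp
    with Suc_times_binomial_add[of n m] show ?thesis by (simp only: Suc[symmetric])
  qed simp
  have "Suc n * ballot (Suc n) 1 + n * ((2 * n) choose n) = Suc n * ((2 * n) choose n)"
    using arg_cong[OF closed, of "\<lambda>x. Suc n * x"] absorb by (simp only: add_mult_distrib2)
  then have "(2 * n) choose n = Suc n * ballot (Suc n) 1" by simp
  then show ?thesis unfolding catalan_def by (simp del: mult_Suc)
qed

lemma ballot_Suc_1_eq_2: "1 \<le> n \<Longrightarrow> ballot (Suc n) 1 = ballot (Suc n) 2"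
  using ballot_Suc_Suc_split[of n 0] by (cases n) (simp_all add: numeral_2_eq_2)

lemma sum_ballot_from_1:
  assumes "1 \<le> n"
  shows "(\<Sum>k=1..n. ballot n (k + j)) = ballot (Suc n) (j + 2)"
proof -
  have "(\<Sum>k=1..n. ballot n (k + j)) = (\<Sum>i<n. ballot n (Suc j + i))"
    by (simp add: sum.atLeast1_atMost_eq add.commute)
  also have "\<dots> = (\<Sum>i<Suc n. ballot n (Suc j + i))"
    using ballot_eq_0[of n "Suc j + n"] by simp
  also have "\<dots> = ballot (Suc n) (j + 2)"
    using sum_ballot_tail[of n "Suc n" "Suc j"] by simp
  finally show ?thesis .
qed

section \<open>Dyck paths by number of returns\<close>

definition dyck_word :: "bool list \<Rightarrow> bool" where
  "dyck_word p \<longleftrightarrow> height p = 0 \<and> (\<forall>i\<le>length p. 0 \<le> height (take i p))"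

lemma mem_dyck_iff: "p \<in> dyck n \<longleftrightarrow> length p = 2 * n \<and> dyck_word p"
  unfolding dyck_def dyck_word_def by auto

lemma height_Nil [simp]: "height [] = 0"
  by (simp add: height_def)

lemma height_Cons [simp]: "height (b # p) = height p + (if b then 1 else -1)"
  by (cases b) (simp_all add: height_def)

lemma height_append [simp]: "height (p @ q) = height p + height q"
  by (simp add: height_def)

lemma dyck_word_Nil [simp]: "dyck_word []"
  by (simp add: dyck_word_def)

abbreviation arch :: "bool list \<Rightarrow> bool list \<Rightarrow> bool list" where
  "arch q r \<equiv> True # q @ False # r"

lemma height_take_arch_pos:
  assumes "dyck_word q" "0 < i" "i \<le> Suc (length q)"
  shows "0 < height (take i (arch q r))"
proof -
  have "take i (arch q r) = True # take (i - 1) q"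
    using assms(2,3) by (cases i) auto
  moreover have "0 \<le> height (take (i - 1) q)"
    using assms unfolding dyck_word_def by simp
  ultimately show ?thesis by simp
qed

lemma height_take_arch_after:
  assumes "dyck_word q" "length q + 2 \<le> i"
  shows "height (take i (arch q r)) = height (take (i - (length q + 2)) r)"
proof -
  obtain d where "i = length q + 2 + d" using le_Suc_ex[OF assms(2)] by blast
  then show ?thesis using assms(1) unfolding dyck_word_def by simp
qed

lemma dyck_word_arch:
  assumes "dyck_word q" "dyck_word r"
  shows "dyck_word (arch q r)"
  unfolding dyck_word_def
proof (intro conjI allI impI)
  show "height (arch q r) = 0" using assms unfolding dyck_word_def by simp
next
  fix i assume "i \<le> length (arch q r)"
  then show "0 \<le> height (take i (arch q r))"
    using assms height_take_arch_pos[OF assms(1), of i r] height_take_arch_after[OF assms(1), of i r]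
    unfolding dyck_word_def by (cases "i = 0 \<or> length q + 2 \<le> i") auto
qed

lemma arch_eq_arch_iff:
  assumes "dyck_word q" "dyck_word q'"
  shows "arch q r = arch q' r' \<longleftrightarrow> q = q' \<and> r = r'"
proof
  assume eq: "arch q r = arch q' r'"
  have no_shorter: "\<not> length a < length b"
    if "dyck_word a" "dyck_word b" "arch a s = arch b s'" for a b s s'
  proof
    assume "length a < length b"
    then have "0 < height (take (length a + 2) (arch b s'))"
      by (intro height_take_arch_pos[OF \<open>dyck_word b\<close>]) simp_all
    moreover have "height (take (length a + 2) (arch a s)) = 0"
      using \<open>dyck_word a\<close> unfolding dyck_word_def by simp
    ultimately show False using that(3) by simp
  qed
  have "length q = length q'"
    using no_shorter[OF assms eq] no_shorter[OF assms(2,1) eq[symmetric]] by simp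
  then show "q = q' \<and> r = r'" using eq by simp
qed simp

lemma returns_Nil [simp]: "returns [] = 0"
proof -
  have "{i. 1 \<le> i \<and> i \<le> length ([] :: bool list) \<and> height (take i []) = 0} = {}" by auto
  then show ?thesis unfolding returns_def by (simp only: card.empty)
qed

lemma returns_append:
  assumes "height p = 0"
  shows "returns (p @ r) = returns p + returns r"
proof -
  let ?Z = "\<lambda>p. {i. 1 \<le> i \<and> i \<le> length p \<and> height (take i p) = 0}"
  have split: "?Z (p @ r) = ?Z p \<union> (\<lambda>j. length p + j) ` ?Z r"
  proof (intro set_eqI iffI)
    fix i assume i: "i \<in> ?Z (p @ r)"
    show "i \<in> ?Z p \<union> (\<lambda>j. length p + j) ` ?Z r"
    proof (cases "i \<le> length p")
      case False
      then have "i - length p \<in> ?Z r" using i assms by auto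
      with False show ?thesis by (auto intro!: image_eqI[of _ _ "i - length p"])
    qed (use i in auto)
  qed (use assms in auto)
  have finite: "finite (?Z s)" for s by (rule finite_subset[of _ "{..length s}"]) auto
  have "card (?Z (p @ r)) = card (?Z p) + card ((\<lambda>j. length p + j) ` ?Z r)"
    unfolding split by (rule card_Un_disjoint) (use finite in auto)
  then show ?thesis unfolding returns_def by (simp add: card_image)
qed

lemma returns_arch:
  assumes "dyck_word q"
  shows "returns (arch q r) = Suc (returns r)"
proof -
  let ?a = "True # q @ [False]"
  have "{i. 1 \<le> i \<and> i \<le> length ?a \<and> height (take i ?a) = 0} = {length q + 2}"
  proof (intro set_eqI iffI)
    fix i assume i: "i \<in> {i. 1 \<le> i \<and> i \<le> length ?a \<and> height (take i ?a) = 0}"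
    then have "\<not> i \<le> Suc (length q)"
      using height_take_arch_pos[OF assms, of i "[]"] by auto
    with i show "i \<in> {length q + 2}" by simp
  qed (use assms in \<open>simp add: dyck_word_def\<close>)
  then have "returns ?a = 1" unfolding returns_def by simp
  moreover have "height ?a = 0" using assms unfolding dyck_word_def by simp
  ultimately show ?thesis using returns_append[of ?a r] by simp
qed

lemma dyck_word_first_return:
  assumes "dyck_word p" "p \<noteq> []"
  obtains f where "0 < f" "f \<le> length p" "height (take f p) = 0"
    "\<And>i. 0 < i \<Longrightarrow> i < f \<Longrightarrow> 0 < height (take i p)"
proof -
  define f where "f = (LEAST i. 0 < i \<and> height (take i p) = 0)"
  have ex: "0 < length p \<and> height (take (length p) p) = 0"
    using assms unfolding dyck_word_def by simp
  have "0 < f \<and> height (take f p) = 0"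
    unfolding f_def by (rule LeastI[of "\<lambda>i. 0 < i \<and> height (take i p) = 0", OF ex])
  moreover have "f \<le> length p"
    unfolding f_def by (rule Least_le[of "\<lambda>i. 0 < i \<and> height (take i p) = 0", OF ex])
  moreover have "0 < height (take i p)" if "0 < i" "i < f" for i
  proof -
    have "height (take i p) \<noteq> 0" using not_less_Least[of i] that unfolding f_def by auto
    moreover have "0 \<le> height (take i p)" using assms(1) that \<open>f \<le> length p\<close> unfolding dyck_word_def by simp
    ultimately show ?thesis by simp
  qed
  ultimately show thesis using that by blast
qed

lemma dyck_word_cases:
  assumes "dyck_word p" "p \<noteq> []"
  obtains q r where "p = arch q r" "dyck_word q" "dyck_word r"
proof -
  obtain f where f: "0 < f" "f \<le> length p" "height (take f p) = 0"
    and before: "\<And>i. 0 < i \<Longrightarrow> i < f \<Longrightarrow> 0 < height (take i p)"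
    using dyck_word_first_return[OF assms] by blast
  obtain b p' where p: "p = b # p'" using assms(2) by (cases p) auto
  have "0 \<le> height (take 1 p)" using assms(1) p unfolding dyck_word_def by fastforce
  then have b: "b = True" using p by (cases b) auto
  then have "2 \<le> f" using f p by (cases "f = 1") auto
  then obtain g where g: "f = Suc (Suc g)" by (metis add_2_eq_Suc le_Suc_ex)
  define q where "q = take g p'"
  define r where "r = drop f p"
  have "0 < height (take (Suc g) p)" using before g by simp
  moreover have "height (take f p) = height (take (Suc g) p) + (if p ! Suc g then 1 else -1)"
    using f(2) g by (simp add: take_Suc_conv_app_nth)
  ultimately have last: "p ! Suc g = False" and "height (take (Suc g) p) = 1"
    using f(3) by (auto split: if_splits)
  then have "height q = 0" using p b q_def by simp
  moreover have "0 \<le> height (take i q)" if "i \<le> length q" for i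
    using before[of "Suc i"] that g p b f(2) q_def by (simp add: min_def)
  ultimately have "dyck_word q" unfolding dyck_word_def by simp
  have "take f p = True # q @ [False]"
    using p b g last f(2) q_def by (simp add: take_Suc_conv_app_nth)
  then have split: "p = arch q r" unfolding r_def by (metis append_take_drop_id append.assoc append_Cons append_Nil)
  have "dyck_word r"
    unfolding dyck_word_def
  proof (intro conjI allI impI)
    show "height r = 0" using assms(1) f(3) split \<open>height q = 0\<close> unfolding dyck_word_def by simp
  next
    fix i assume "i \<le> length r"
    then have "0 \<le> height (take (f + i) p)" using assms(1) f(2) unfolding dyck_word_def r_def by simp
    then show "0 \<le> height (take i r)" using f(3) unfolding r_def by (simp add: take_add)
  qed
  with that split \<open>dyck_word q\<close> show thesis by blast
qed

lemma finite_dyck: "finite (dyck n)"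
proof (rule finite_subset)
  show "dyck n \<subseteq> {p. set p \<subseteq> UNIV \<and> length p = 2 * n}" by (auto simp: mem_dyck_iff)
qed (rule finite_lists_length_eq, simp)

lemma returns_le_length: "returns p \<le> length p"
proof -
  have "{i. 1 \<le> i \<and> i \<le> length p \<and> height (take i p) = 0} \<subseteq> {1..length p}" by auto
  then show ?thesis unfolding returns_def using card_mono[of "{1..length p}"] by fastforce
qed

definition arch_triples :: "nat \<Rightarrow> nat \<Rightarrow> (bool list \<times> bool list \<times> bool list) set" where
  "arch_triples n k = {(q1, q2, r). dyck_word q1 \<and> dyck_word q2 \<and> dyck_word r \<and> returns r = k
                         \<and> length q1 + length q2 + length r + 2 = 2 * n}"

lemma dyck_returns_Suc_eq:
  "{p\<in>dyck (Suc n). returns p = Suc k}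
     = arch [] ` {p\<in>dyck n. returns p = k} \<union> (\<lambda>(q1, q2, r). arch (arch q1 q2) r) ` arch_triples n k"
  (is "?A = ?B \<union> ?nested ` ?T")
proof (intro set_eqI iffI)
  fix p assume "p \<in> ?A"
  then have p: "dyck_word p" "length p = 2 * Suc n" "returns p = Suc k" by (auto simp: mem_dyck_iff)
  then obtain q r where qr: "p = arch q r" "dyck_word q" "dyck_word r"
    by (auto elim: dyck_word_cases)
  have "returns r = k" using p(3) qr returns_arch by simp
  show "p \<in> ?B \<union> ?nested ` ?T"
  proof (cases "q = []")
    case True
    then have "r \<in> {p\<in>dyck n. returns p = k}"
      using p qr \<open>returns r = k\<close> by (auto simp: mem_dyck_iff)
    then show ?thesis using qr(1) True by blast
  next
    case False
    then obtain q1 q2 where "q = arch q1 q2" "dyck_word q1" "dyck_word q2"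
      using qr(2) by (auto elim: dyck_word_cases)
    with p qr \<open>returns r = k\<close> have "(q1, q2, r) \<in> ?T" "p = ?nested (q1, q2, r)"
      unfolding arch_triples_def by auto
    then show ?thesis by blast
  qed
next
  fix p assume "p \<in> ?B \<union> ?nested ` ?T"
  then consider r where "r \<in> dyck n" "returns r = k" "p = arch [] r"
    | q1 q2 r where "(q1, q2, r) \<in> ?T" "p = arch (arch q1 q2) r"
    by auto
  then show "p \<in> ?A"
  proof cases
    case (1 r)
    then show ?thesis
      using dyck_word_arch[OF dyck_word_Nil, of r] returns_arch[OF dyck_word_Nil, of r]
      by (auto simp: mem_dyck_iff)
  next
    case (2 q1 q2 r)
    then have "dyck_word (arch q1 q2)" unfolding arch_triples_def by (auto intro: dyck_word_arch)
    with 2 show ?thesis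
      using dyck_word_arch[of "arch q1 q2" r] returns_arch[of "arch q1 q2" r]
      unfolding arch_triples_def by (auto simp: mem_dyck_iff)
  qed
qed

lemma dyck_returns_Suc_Suc_eq:
  "{p\<in>dyck (Suc n). returns p = Suc (Suc k)} = (\<lambda>(q1, q2, r). arch q1 (arch q2 r)) ` arch_triples n k"
  (is "?A = ?juxtaposed ` ?T")
proof (intro set_eqI iffI)
  fix p assume "p \<in> ?A"
  then have p: "dyck_word p" "length p = 2 * Suc n" "returns p = Suc (Suc k)" by (auto simp: mem_dyck_iff)
  then obtain q1 s where s: "p = arch q1 s" "dyck_word q1" "dyck_word s"
    by (auto elim: dyck_word_cases)
  then have "returns s = Suc k" using p(3) returns_arch by simp
  then have "s \<noteq> []" by auto
  then obtain q2 r where "s = arch q2 r" "dyck_word q2" "dyck_word r"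
    using s(3) by (auto elim: dyck_word_cases)
  with p s have "(q1, q2, r) \<in> ?T" "p = ?juxtaposed (q1, q2, r)"
    using returns_arch unfolding arch_triples_def by auto
  then show "p \<in> ?juxtaposed ` ?T" by blast
next
  fix p assume "p \<in> ?juxtaposed ` ?T"
  then obtain q1 q2 r where t: "(q1, q2, r) \<in> ?T" "p = arch q1 (arch q2 r)" by auto
  then have "dyck_word (arch q2 r)" unfolding arch_triples_def by (auto intro: dyck_word_arch)
  with t show "p \<in> ?A"
    using dyck_word_arch[of q1 "arch q2 r"] returns_arch[of q1 "arch q2 r"] returns_arch[of q2 r]
    unfolding arch_triples_def by (auto simp: mem_dyck_iff)
qed

text \<open>A path with k+1 returns either starts with UD, or it is U (U q1 D q2) D r; lifting the
  second arch out, U q1 D U q2 D r, gives exactly the paths with k+2 returns.\<close>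

lemma card_dyck_returns_Suc:
  "card {p\<in>dyck (Suc n). returns p = Suc k}
     = card {p\<in>dyck n. returns p = k} + card {p\<in>dyck (Suc n). returns p = Suc (Suc k)}"
proof -
  let ?nested = "\<lambda>(q1, q2, r). arch (arch q1 q2) r"
  let ?juxtaposed = "\<lambda>(q1, q2, r). arch q1 (arch q2 r)"
  have "inj (arch [])" "inj_on ?nested (arch_triples n k)" "inj_on ?juxtaposed (arch_triples n k)"
    unfolding arch_triples_def inj_on_def using arch_eq_arch_iff dyck_word_arch by auto
  moreover have "arch [] ` {p\<in>dyck n. returns p = k} \<inter> ?nested ` arch_triples n k = {}"
    unfolding arch_triples_def by auto
  moreover have "finite {p\<in>dyck (Suc n). returns p = Suc k}" using finite_dyck by simp
  then have "finite (arch [] ` {p\<in>dyck n. returns p = k})" "finite (?nested ` arch_triples n k)"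
    unfolding dyck_returns_Suc_eq[of n k] by simp_all
  ultimately show ?thesis unfolding dyck_returns_Suc_eq[of n k] dyck_returns_Suc_Suc_eq[of n k]
    by (simp add: card_Un_disjoint card_image inj_on_subset)
qed

lemma returns_pos:
  assumes "dyck_word p" "p \<noteq> []"
  shows "0 < returns p"
proof -
  obtain q r where "p = arch q r" "dyck_word q" using dyck_word_cases[OF assms] by blast
  then show ?thesis by (simp add: returns_arch)
qed

lemma card_dyck_returns: "card {p\<in>dyck n. returns p = k} = ballot n k"
proof (induction n arbitrary: k)
  case 0
  have "{p\<in>dyck 0. returns p = k} = (if k = 0 then {[]} else {})"
    by (auto simp: mem_dyck_iff)
  then show ?case by simp
next
  case (Suc n)
  note IH_n = Suc.IH
  have high: "card {p\<in>dyck (Suc n). returns p = k} = ballot (Suc n) k" if k: "2 * Suc n < k" for k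
  proof -
    have "returns p \<noteq> k" if "p \<in> dyck (Suc n)" for p
      using returns_le_length[of p] that k by (simp add: mem_dyck_iff)
    then have "{p\<in>dyck (Suc n). returns p = k} = {}" by blast
    then show ?thesis using k by (simp only: card.empty) (simp add: ballot_eq_0)
  qed
  show ?case
  proof (cases "2 * Suc n < k")
    case False
    then have "k \<le> Suc (2 * Suc n)" by simp
    then show ?thesis
    proof (induction k rule: inc_induct)
      case (step k)
      show ?case
      proof (cases k)
        case 0
        have "returns p \<noteq> 0" if "p \<in> dyck (Suc n)" for p
          using that by (intro returns_pos[THEN less_not_refl3, symmetric]) (auto simp: mem_dyck_iff)
        then have "{p\<in>dyck (Suc n). returns p = 0} = {}" by blast
        with 0 show ?thesis by (simp only: card.empty) simp
      next
        case (Suc k')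
        with step.IH show ?thesis
          using card_dyck_returns_Suc[of n k'] IH_n[of k'] ballot_Suc_Suc_split[of n k'] by simp
      qed
    qed (simp add: high)
  qed (rule high)
qed

lemma card_dyck: "card (dyck n) = catalan n"
proof -
  have "card (dyck n) = (\<Sum>k<Suc (2 * n). card {p\<in>dyck n. returns p = k})"
  proof (rule card_eq_sum_card_fibres[OF finite_dyck])
    have "returns p < Suc (2 * n)" if "p \<in> dyck n" for p
      using returns_le_length[of p] that by (simp add: mem_dyck_iff)
    then show "(\<lambda>p. returns p) ` dyck n \<subseteq> {..<Suc (2 * n)}" by auto
  qed simp
  also have "\<dots> = (\<Sum>k<Suc (2 * n). ballot n (0 + k))"
    by (simp add: card_dyck_returns)
  also have "\<dots> = catalan n"
    using sum_ballot_tail[of n "Suc (2 * n)" 0] ballot_Suc_1_eq_catalan[of n] by simp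
  finally show ?thesis .
qed

section \<open>Avoidance of 0011 and 0021\<close>

text \<open>An occurrence of 0011 or 0021 is a subsequence a a b c with a < c \<le> b.\<close>

definition avoids_0011_0021 :: "nat list \<Rightarrow> bool" where
  "avoids_0011_0021 x \<longleftrightarrow>
     \<not> (\<exists>i j l m. i < j \<and> j < l \<and> l < m \<and> m < length x \<and> x ! i = x ! j \<and> x ! i < x ! m \<and> x ! m \<le> x ! l)"

lemma subseq_nth_indices:
  assumes "subseq ys xs"
  obtains f where "\<And>a b. a < b \<Longrightarrow> b < length ys \<Longrightarrow> f a < f b"
    "\<And>k. k < length ys \<Longrightarrow> f k < length xs \<and> ys ! k = xs ! f k"
proof -
  from assms have "\<exists>f. (\<forall>a b. a < b \<longrightarrow> b < length ys \<longrightarrow> f a < f b)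
      \<and> (\<forall>k<length ys. f k < length xs \<and> ys ! k = xs ! f k)"
  proof (induction rule: list_emb.induct)
    case (list_emb_Cons ys xs x)
    then obtain f where "\<forall>a b. a < b \<longrightarrow> b < length ys \<longrightarrow> f a < f b"
      "\<forall>k<length ys. f k < length xs \<and> ys ! k = xs ! f k" by blast
    then show ?case by (intro exI[of _ "\<lambda>k. Suc (f k)"]) auto
  next
    case (list_emb_Cons2 y x ys xs)
    then obtain f where f: "\<forall>a b. a < b \<longrightarrow> b < length ys \<longrightarrow> f a < f b"
      "\<forall>k<length ys. f k < length xs \<and> ys ! k = xs ! f k" by blast
    define g where "g k = (case k of 0 \<Rightarrow> 0 | Suc k' \<Rightarrow> Suc (f k'))" for k
    have "\<forall>a b. a < b \<longrightarrow> b < length (y # ys) \<longrightarrow> g a < g b"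
      using f(1) unfolding g_def by (auto split: nat.split)
    moreover have "\<forall>k<length (y # ys). g k < length (x # xs) \<and> (y # ys) ! k = (x # xs) ! g k"
      using f(2) list_emb_Cons2.hyps unfolding g_def by (auto split: nat.split)
    ultimately show ?case by blast
  qed simp
  with that show thesis by blast
qed

lemma subseq_map_nth:
  assumes "sorted_wrt (<) is" "\<forall>i\<in>set is. i < length x"
  shows "subseq (map ((!) x) is) x"
proof -
  have "subseq is [0..<length x]"
    using assms by (intro sorted_subset_imp_subseq) auto
  then have "subseq (map ((!) x) is) (map ((!) x) [0..<length x])" by (rule subseq_map)
  then show ?thesis by (simp add: map_nth)
qed

lemma contains_0011_or_0021_iff:
  "(\<exists>\<tau>\<in>{[0,0,1,1], [0,0,2,1]}. contains x \<tau>) \<longleftrightarrow> \<not> avoids_0011_0021 x"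
proof
  assume "\<exists>\<tau>\<in>{[0,0,1,1], [0,0,2,1]}. contains x \<tau>"
  then obtain \<tau> ys where \<tau>: "\<tau> \<in> {[0,0,1,1], [0,0,2,1]}" "subseq ys x" "order_iso ys \<tau>"
    unfolding contains_def by blast
  then have len: "length ys = 4" unfolding order_iso_def by auto
  obtain f where f: "\<And>a b. a < b \<Longrightarrow> b < length ys \<Longrightarrow> f a < f b"
    "\<And>k. k < length ys \<Longrightarrow> f k < length x \<and> ys ! k = x ! f k"
    using subseq_nth_indices[OF \<tau>(2)] by blast
  have "ys ! 0 = ys ! 1" "ys ! 0 < ys ! 3" "ys ! 3 \<le> ys ! 2"
    using \<tau>(1,3) len unfolding order_iso_def by (auto simp: le_less)
  then have "x ! f 0 = x ! f 1" "x ! f 0 < x ! f 3" "x ! f 3 \<le> x ! f 2"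
    using f(2) len by auto
  moreover have "f 0 < f 1" "f 1 < f 2" "f 2 < f 3" "f 3 < length x"
    using f len by auto
  ultimately show "\<not> avoids_0011_0021 x"
    unfolding avoids_0011_0021_def by blast
next
  assume "\<not> avoids_0011_0021 x"
  then obtain i j l m where occ: "i < j" "j < l" "l < m" "m < length x"
    "x ! i = x ! j" "x ! i < x ! m" "x ! m \<le> x ! l"
    unfolding avoids_0011_0021_def by blast
  have sub: "subseq [x ! i, x ! j, x ! l, x ! m] x"
    using subseq_map_nth[of "[i, j, l, m]" x] occ by simp
  show "\<exists>\<tau>\<in>{[0,0,1,1], [0,0,2,1]}. contains x \<tau>"
  proof (cases "x ! m = x ! l")
    case True
    then have "order_iso [x ! i, x ! j, x ! l, x ! m] [0,0,1,1]"
      using occ unfolding order_iso_def by (simp add: numeral_eq_Suc All_less_Suc)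
    with sub show ?thesis unfolding contains_def by blast
  next
    case False
    then have "order_iso [x ! i, x ! j, x ! l, x ! m] [0,0,2,1]"
      using occ unfolding order_iso_def by (simp add: numeral_eq_Suc All_less_Suc)
    with sub show ?thesis unfolding contains_def by blast
  qed
qed

lemma avoids_all_0011_0021_iff:
  "avoids_all x {[0,0,1,1], [0,0,2,1]} \<longleftrightarrow> avoids_0011_0021 x"
  using contains_0011_or_0021_iff[of x] unfolding avoids_all_def by blast

lemma asc_snoc:
  assumes "xs \<noteq> []"
  shows "asc (xs @ [v]) = asc xs + (if last xs < v then 1 else 0)"
proof -
  let ?A = "{j. Suc j < length xs \<and> xs ! j < xs ! Suc j}"
  have last: "last xs = xs ! (length xs - 1)" using assms by (simp add: last_conv_nth)
  have final: "j = length xs - 1" if "j < length xs" "\<not> Suc j < length xs" for j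
    using that by arith
  have "{j. Suc j < length (xs @ [v]) \<and> (xs @ [v]) ! j < (xs @ [v]) ! Suc j}
      = ?A \<union> (if last xs < v then {length xs - 1} else {})"
    using assms last by (auto simp: nth_append less_Suc_eq dest: final split: if_splits)
  moreover have "finite ?A" by (rule finite_subset[of _ "{..<length xs}"]) auto
  moreover have "length xs - 1 \<notin> ?A" by auto
  ultimately show ?thesis unfolding asc_def by auto
qed

lemma asc_le_length: "asc xs \<le> length xs - 1"
proof -
  have "{j. Suc j < length xs \<and> xs ! j < xs ! Suc j} \<subseteq> {..<length xs - 1}" by auto
  then show ?thesis unfolding asc_def using card_mono[of "{..<length xs - 1}"] by fastforce
qed

lemma ascent_seq_snoc:
  assumes "xs \<noteq> []"
  shows "ascent_seq (xs @ [v]) \<longleftrightarrow> ascent_seq xs \<and> v \<le> asc xs + 1"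
  using assms unfolding ascent_seq_def by (auto simp: nth_append less_Suc_eq)

lemma ascent_seq_nth_le_asc:
  "ascent_seq xs \<Longrightarrow> i < length xs \<Longrightarrow> xs ! i \<le> asc xs"
proof (induction xs arbitrary: i rule: rev_induct)
  case (snoc v ys)
  show ?case
  proof (cases "ys = []")
    case True
    with snoc.prems show ?thesis by (simp add: ascent_seq_def)
  next
    case False
    have ys: "ascent_seq ys" "v \<le> asc ys + 1"
      using snoc.prems(1) ascent_seq_snoc[OF False] by auto
    have mono: "asc ys \<le> asc (ys @ [v])" using asc_snoc[OF False] by simp
    show ?thesis
    proof (cases "i < length ys")
      case True
      then show ?thesis using snoc.IH[OF ys(1) True] mono by (simp add: nth_append)
    next
      case False
      then have i: "i = length ys" using snoc.prems by simp
      have "last ys \<le> asc ys"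
        using snoc.IH[OF ys(1), of "length ys - 1"] \<open>ys \<noteq> []\<close> by (simp add: last_conv_nth)
      then show ?thesis using i ys(2) asc_snoc[OF \<open>ys \<noteq> []\<close>, of v] by auto
    qed
  qed
qed simp

text \<open>Appending v to x would create an occurrence ending in v.\<close>

definition blocked :: "nat list \<Rightarrow> nat \<Rightarrow> bool" where
  "blocked x v \<longleftrightarrow> (\<exists>i j l. i < j \<and> j < l \<and> l < length x \<and> x ! i = x ! j \<and> x ! i < v \<and> v \<le> x ! l)"

lemma avoids_0011_0021_snoc:
  "avoids_0011_0021 (xs @ [v]) \<longleftrightarrow> avoids_0011_0021 xs \<and> \<not> blocked xs v"
proof -
  define occ where "occ (y :: nat list) i j l m \<longleftrightarrow> i < j \<and> j < l \<and> l < m \<and> m < length y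
      \<and> y ! i = y ! j \<and> y ! i < y ! m \<and> y ! m \<le> y ! l" for y i j l m
  have "occ (xs @ [v]) i j l m \<longleftrightarrow> occ xs i j l m \<or> m = length xs \<and> i < j \<and> j < l
      \<and> l < length xs \<and> xs ! i = xs ! j \<and> xs ! i < v \<and> v \<le> xs ! l" for i j l m
    unfolding occ_def by (auto simp: nth_append less_Suc_eq)
  then show ?thesis unfolding avoids_0011_0021_def blocked_def occ_def[symmetric] by blast
qed

lemma asc_Cons_Cons: "asc (a # b # xs) = asc (b # xs) + (if a < b then 1 else 0)"
proof -
  define A where "A ys = {j. Suc j < length ys \<and> ys ! j < ys ! Suc j}" for ys :: "nat list"
  have split: "A (a # b # xs) = (if a < b then {0} else {}) \<union> Suc ` A (b # xs)"
  proof (intro set_eqI)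
    fix j
    show "j \<in> A (a # b # xs) \<longleftrightarrow> j \<in> (if a < b then {0} else {}) \<union> Suc ` A (b # xs)"
      unfolding A_def by (cases j) (simp_all add: inj_image_mem_iff)
  qed
  have "finite (A (b # xs))" unfolding A_def by (rule finite_subset[of _ "{..<length (b # xs)}"]) auto
  then have "card (A (a # b # xs)) = card (A (b # xs)) + (if a < b then 1 else 0)"
    unfolding split by (simp add: card_image)
  then show ?thesis unfolding asc_def A_def .
qed
lemma asc_singleton: "asc [a] = 0"
  by (simp add: asc_def)

lemma asc_map_Suc: "asc (map Suc y) = asc y"
  unfolding asc_def by (rule arg_cong[where f = card]) auto

section \<open>The generating tree\<close>

lemma blocked_snoc:
  "blocked (x @ [v]) u \<longleftrightarrow>
     blocked x u \<or> (\<exists>i j. i < j \<and> j < length x \<and> x ! i = x ! j \<and> x ! i < u) \<and> u \<le> v"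
proof -
  define witness where "witness (y :: nat list) i j l \<longleftrightarrow>
      i < j \<and> j < l \<and> l < length y \<and> y ! i = y ! j \<and> y ! i < u \<and> u \<le> y ! l" for y i j l
  have "witness (x @ [v]) i j l \<longleftrightarrow> witness x i j l \<or>
      l = length x \<and> i < j \<and> j < length x \<and> x ! i = x ! j \<and> x ! i < u \<and> u \<le> v" for i j l
    unfolding witness_def by (auto simp: nth_append less_Suc_eq)
  then show ?thesis unfolding blocked_def witness_def[symmetric] by blast
qed

definition asc_avoider :: "nat list \<Rightarrow> bool" where
  "asc_avoider x \<longleftrightarrow> ascent_seq x \<and> avoids_0011_0021 x"

definition Av :: "nat \<Rightarrow> nat list set" where
  "Av n = {x. length x = n \<and> asc_avoider x}"

lemma S_0011_0021_eq_Av: "S n {[0,0,1,1], [0,0,2,1]} = Av n"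
  unfolding S_def Av_def asc_avoider_def using avoids_all_0011_0021_iff by blast

lemma asc_avoider_snoc:
  "xs \<noteq> [] \<Longrightarrow> asc_avoider (xs @ [v]) \<longleftrightarrow> asc_avoider xs \<and> v \<le> asc xs + 1 \<and> \<not> blocked xs v"
  unfolding asc_avoider_def by (auto simp: ascent_seq_snoc avoids_0011_0021_snoc)

lemma asc_avoider_singleton: "asc_avoider [a] \<longleftrightarrow> a = 0"
  unfolding asc_avoider_def ascent_seq_def avoids_0011_0021_def by auto

lemma asc_avoider_nonempty: "asc_avoider x \<Longrightarrow> x \<noteq> []"
  unfolding asc_avoider_def ascent_seq_def by simp

lemma asc_avoider_nth_0: "asc_avoider x \<Longrightarrow> x ! 0 = 0"
  unfolding asc_avoider_def ascent_seq_def by simp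

lemma asc_avoider_nth_le_asc: "asc_avoider x \<Longrightarrow> i < length x \<Longrightarrow> x ! i \<le> asc x"
  unfolding asc_avoider_def using ascent_seq_nth_le_asc by blast

definition extensions :: "nat list \<Rightarrow> nat set" where
  "extensions x = {v. asc_avoider (x @ [v])}"

definition label :: "nat list \<Rightarrow> nat" where
  "label x = card (extensions x)"

lemma extensions_eq:
  "asc_avoider x \<Longrightarrow> extensions x = {v. v \<le> asc x + 1 \<and> \<not> blocked x v}"
  unfolding extensions_def using asc_avoider_snoc asc_avoider_nonempty by blast

lemma extensions_subset: "asc_avoider x \<Longrightarrow> extensions x \<subseteq> {..asc x + 1}"
  by (auto simp: extensions_eq)

lemma finite_extensions: "asc_avoider x \<Longrightarrow> finite (extensions x)"
  using extensions_subset finite_subset by blast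

lemma not_blocked_0: "\<not> blocked x 0"
  unfolding blocked_def by simp

lemma not_blocked_above_asc: "asc_avoider x \<Longrightarrow> asc x < v \<Longrightarrow> \<not> blocked x v"
  unfolding blocked_def using asc_avoider_nth_le_asc by (meson le_trans not_le)

lemma zero_mem_extensions: "asc_avoider x \<Longrightarrow> 0 \<in> extensions x"
  by (simp add: extensions_eq not_blocked_0)

lemma Suc_asc_mem_extensions: "asc_avoider x \<Longrightarrow> asc x + 1 \<in> extensions x"
  by (simp add: extensions_eq not_blocked_above_asc)

lemma label_ge_2: "asc_avoider x \<Longrightarrow> 2 \<le> label x"
proof -
  assume x: "asc_avoider x"
  then have "{0, asc x + 1} \<subseteq> extensions x"
    using zero_mem_extensions Suc_asc_mem_extensions by auto
  then have "card {0, asc x + 1} \<le> label x"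
    unfolding label_def by (rule card_mono[OF finite_extensions[OF x]])
  then show ?thesis by simp
qed

lemma label_le_Suc_length: "asc_avoider x \<Longrightarrow> label x \<le> length x + 1"
proof -
  assume x: "asc_avoider x"
  then have "label x \<le> card {..asc x + 1}"
    unfolding label_def by (intro card_mono extensions_subset) simp_all
  then have "label x \<le> asc x + 2" by simp
  moreover have "asc x \<le> length x - 1" by (rule asc_le_length)
  moreover have "0 < length x" using asc_avoider_nonempty[OF x] by simp
  ultimately show ?thesis by linarith
qed

lemma extensions_snoc_0:
  assumes x: "asc_avoider x"
  shows "extensions (x @ [0]) = extensions x"
proof -
  have "asc_avoider (x @ [0])" using zero_mem_extensions[OF x] unfolding extensions_def by simp
  moreover have "asc (x @ [0]) = asc x" using asc_snoc[OF asc_avoider_nonempty[OF x]] by simp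
  moreover have "blocked (x @ [0]) u \<longleftrightarrow> blocked x u" for u by (auto simp: blocked_snoc)
  ultimately show ?thesis using x by (simp add: extensions_eq)
qed

lemma count_list_ge_2_obtains_zeros:
  assumes "2 \<le> count_list y (0 :: nat)"
  obtains i j where "i < j" "j < length y" "y ! i = 0" "y ! j = 0"
proof -
  from assms have "\<exists>i j. i < j \<and> j < length y \<and> y ! i = 0 \<and> y ! j = 0"
  proof (induction y)
    case (Cons a y)
    show ?case
    proof (cases "a = 0")
      case True
      with Cons.prems have "0 \<in> set y" using count_notin by fastforce
      then obtain j where "j < length y" "y ! j = 0" by (metis in_set_conv_nth)
      with True show ?thesis by (intro exI[of _ 0] exI[of _ "Suc j"]) simp
    next
      case False
      with Cons obtain i j where "i < j" "j < length y" "y ! i = 0" "y ! j = 0" by auto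
      then show ?thesis by (intro exI[of _ "Suc i"] exI[of _ "Suc j"]) simp
    qed
  qed simp
  with that show thesis by blast
qed

context
  fixes x :: "nat list" and v :: nat
  assumes x: "asc_avoider x" and zeros: "2 \<le> count_list x 0"
    and v: "v \<in> extensions x" "0 < v"
begin

lemma last_less_extension: "last x < v"
proof (rule ccontr)
  assume "\<not> last x < v"
  obtain i j where ij: "i < j" "j < length x" "x ! i = 0" "x ! j = 0"
    using count_list_ge_2_obtains_zeros[OF zeros] .
  have last: "last x = x ! (length x - 1)" using asc_avoider_nonempty[OF x] by (simp add: last_conv_nth)
  with \<open>\<not> last x < v\<close> v(2) ij have "j < length x - 1" by (cases "j = length x - 1") auto
  with ij last \<open>\<not> last x < v\<close> v(2) have "blocked x v"
    unfolding blocked_def by (intro exI[of _ i] exI[of _ j] exI[of _ "length x - 1"]) simp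
  with v(1) x show False by (simp add: extensions_eq)
qed

lemma extensions_snoc_pos:
  "extensions (x @ [v]) = insert 0 (insert (asc x + 2) {u\<in>extensions x. v < u})"
proof -
  have x': "asc_avoider (x @ [v])" using v(1) unfolding extensions_def by simp
  have asc': "asc (x @ [v]) = asc x + 1"
    using asc_snoc[OF asc_avoider_nonempty[OF x]] last_less_extension by simp
  obtain i j where ij: "i < j" "j < length x" "x ! i = 0" "x ! j = 0"
    using count_list_ge_2_obtains_zeros[OF zeros] .
  have "(\<exists>i j. i < j \<and> j < length x \<and> x ! i = x ! j \<and> x ! i < u) \<longleftrightarrow> 0 < u" for u
  proof
    assume "0 < u"
    with ij show "\<exists>i j. i < j \<and> j < length x \<and> x ! i = x ! j \<and> x ! i < u" by metis
  qed auto
  then have blocked': "blocked (x @ [v]) u \<longleftrightarrow> blocked x u \<or> 0 < u \<and> u \<le> v" for u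
    by (simp add: blocked_snoc)
  have "v \<le> asc x + 1" using v(1) x by (simp add: extensions_eq)
  then show ?thesis
    using x x' not_blocked_0 not_blocked_above_asc[OF x, of "asc x + 2"]
    by (auto simp: extensions_eq asc' blocked')
qed

lemma label_snoc_pos: "label (x @ [v]) = card {u\<in>extensions x. v < u} + 2"
proof -
  have "asc x + 2 \<notin> {u\<in>extensions x. v < u}" using extensions_subset[OF x] by auto
  then show ?thesis
    unfolding label_def extensions_snoc_pos using finite_extensions[OF x] by simp
qed

end

definition shift :: "nat list \<Rightarrow> nat list" where
  "shift y = 0 # map Suc y"

lemma asc_shift: "y \<noteq> [] \<Longrightarrow> asc (shift y) = asc y + 1"
proof (cases y)
  case (Cons b ys)
  then have "asc (shift y) = asc (map Suc y) + 1" by (simp add: shift_def asc_Cons_Cons)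
  then show ?thesis by (simp add: asc_map_Suc)
qed simp

lemma count_list_shift: "count_list (shift y) 0 = 1"
  by (simp add: shift_def count_list_0_iff)

lemma inj_shift: "inj shift"
  unfolding shift_def inj_def by (simp add: inj_map_eq_map)

lemma length_shift [simp]: "length (shift y) = Suc (length y)"
  by (simp add: shift_def)

lemma shift_nth_Suc [simp]: "shift y ! Suc k = Suc (y ! k)" if "k < length y"
  using that by (simp add: shift_def)

lemma blocked_shift: "blocked (shift y) u \<longleftrightarrow> 0 < u \<and> blocked y (u - 1)"
proof
  assume "blocked (shift y) u"
  then obtain i j l where occ: "i < j" "j < l" "l < length (shift y)"
    "shift y ! i = shift y ! j" "shift y ! i < u" "u \<le> shift y ! l"
    unfolding blocked_def by blast
  obtain j' l' where jl: "j = Suc j'" "l = Suc l'"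
    using occ(1,2) by (cases j; cases l) auto
  have "i \<noteq> 0"
  proof
    assume "i = 0"
    then have "shift y ! j = 0" using occ(4) by (simp add: shift_def)
    with jl occ(2,3) show False by simp
  qed
  then obtain i' where i: "i = Suc i'" using not0_implies_Suc by blast
  have "i' < j'" "j' < l'" "l' < length y" using occ(1-3) i jl by simp_all
  moreover have "y ! i' = y ! j'" "y ! i' < u - 1" "u - 1 \<le> y ! l'"
    using occ(3-6) i jl \<open>i' < j'\<close> \<open>j' < l'\<close> by simp_all
  moreover have "0 < u" using occ(5) by linarith
  ultimately show "0 < u \<and> blocked y (u - 1)"
    unfolding blocked_def by blast
next
  assume "0 < u \<and> blocked y (u - 1)"
  then obtain i j l where occ: "0 < u" "i < j" "j < l" "l < length y"
    "y ! i = y ! j" "y ! i < u - 1" "u - 1 \<le> y ! l"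
    unfolding blocked_def by blast
  then have "shift y ! Suc i = shift y ! Suc j" "shift y ! Suc i < u" "u \<le> shift y ! Suc l"
    by simp_all
  with occ(2-4) show "blocked (shift y) u"
    unfolding blocked_def by (intro exI[of _ "Suc i"] exI[of _ "Suc j"] exI[of _ "Suc l"]) simp
qed

lemma asc_avoider_shift: "y \<noteq> [] \<Longrightarrow> asc_avoider (shift y) \<longleftrightarrow> asc_avoider y"
proof (induction y rule: rev_induct)
  case (snoc v ys)
  show ?case
  proof (cases "ys = []")
    case True
    then show ?thesis
      using asc_avoider_snoc[of "[0]" "Suc v"]
      by (simp add: shift_def asc_avoider_singleton blocked_def asc_singleton)
  next
    case False
    have "shift (ys @ [v]) = shift ys @ [Suc v]" by (simp add: shift_def)
    moreover have "shift ys \<noteq> []" by (simp add: shift_def)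
    ultimately show ?thesis
      using snoc.IH[OF False] asc_shift[OF False] blocked_shift[of ys "Suc v"]
      by (simp add: asc_avoider_snoc False)
  qed
qed simp

lemma extensions_shift:
  assumes y: "asc_avoider y"
  shows "extensions (shift y) = insert 0 (Suc ` extensions y)"
proof -
  have y_ne: "y \<noteq> []" using asc_avoider_nonempty[OF y] .
  then have "asc_avoider (shift y)" using asc_avoider_shift y by simp
  show ?thesis
  proof (intro set_eqI)
    fix u
    show "u \<in> extensions (shift y) \<longleftrightarrow> u \<in> insert 0 (Suc ` extensions y)"
      using y \<open>asc_avoider (shift y)\<close>
      by (cases u) (auto simp: extensions_eq asc_shift[OF y_ne] blocked_shift not_blocked_0)
  qed
qed

lemma label_shift: "asc_avoider y \<Longrightarrow> label (shift y) = label y + 1"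
  unfolding label_def by (simp add: extensions_shift finite_extensions card_image)

section \<open>Counting by zeros and labels\<close>

lemma finite_Av: "finite (Av n)"
proof (rule finite_subset)
  have "set x \<subseteq> {..n}" if "x \<in> Av n" for x
  proof
    fix v assume "v \<in> set x"
    then obtain i where "i < length x" "x ! i = v" by (metis in_set_conv_nth)
    with that have "v \<le> asc x" using asc_avoider_nth_le_asc unfolding Av_def by blast
    with that show "v \<in> {..n}" using asc_le_length[of x] unfolding Av_def by simp
  qed
  then show "Av n \<subseteq> {x. set x \<subseteq> {..n} \<and> length x = n}" by (auto simp: Av_def)
qed (rule finite_lists_length_eq, simp)

lemma count_list_0_pos: "asc_avoider x \<Longrightarrow> 0 < count_list x 0"
  using asc_avoider_nonempty asc_avoider_nth_0 count_list_0_iff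
  by (metis gr0I length_greater_0_conv nth_mem)

lemma Av_1: "Av 1 = {[0]}"
  by (auto simp: Av_def length_Suc_conv asc_avoider_singleton)

lemma label_0: "label [0] = 2"
proof -
  have "extensions [0] = {0, 1}"
    using asc_avoider_singleton[of 0] by (auto simp: extensions_eq asc_singleton blocked_def)
  then show ?thesis by (simp add: label_def)
qed

lemma Av_Suc_one_zero:
  assumes "1 \<le> n"
  shows "{x\<in>Av (Suc n). count_list x 0 = 1} = shift ` Av n"
proof (intro set_eqI iffI)
  fix x assume "x \<in> {x\<in>Av (Suc n). count_list x 0 = 1}"
  then have x: "length x = Suc n" "asc_avoider x" "count_list x 0 = 1" by (auto simp: Av_def)
  then obtain x' where x': "x = 0 # x'"
    using asc_avoider_nonempty[OF x(2)] asc_avoider_nth_0[OF x(2)] by (cases x) auto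
  then have "0 \<notin> set x'" using x(3) count_list_0_iff by fastforce
  then have "map Suc (map (\<lambda>v. v - 1) x') = x'" by (induction x') auto
  then have shifted: "x = shift (map (\<lambda>v. v - 1) x')" using x' by (simp add: shift_def)
  moreover have "map (\<lambda>v. v - 1) x' \<noteq> []" using x(1) x' assms by auto
  ultimately have "map (\<lambda>v. v - 1) x' \<in> Av n"
    using x asc_avoider_shift unfolding Av_def by auto
  with shifted show "x \<in> shift ` Av n" by blast
next
  fix x assume "x \<in> shift ` Av n"
  then obtain y where "y \<in> Av n" "x = shift y" by blast
  moreover then have "y \<noteq> []" using assms by (auto simp: Av_def)
  ultimately show "x \<in> {x\<in>Av (Suc n). count_list x 0 = 1}"
    using asc_avoider_shift count_list_shift by (auto simp: Av_def)
qed

lemma card_Av_Suc: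
  assumes "1 \<le> n"
  shows "card {x\<in>Av (Suc n). P x} = (\<Sum>y\<in>Av n. card {v\<in>extensions y. P (y @ [v])})"
proof -
  let ?children = "\<lambda>y. (\<lambda>v. y @ [v]) ` {v\<in>extensions y. P (y @ [v])}"
  have "{x\<in>Av (Suc n). P x} = (\<Union>y\<in>Av n. ?children y)"
  proof (intro set_eqI iffI)
    fix x assume "x \<in> {x\<in>Av (Suc n). P x}"
    then have x: "length x = Suc n" "asc_avoider x" "P x" by (auto simp: Av_def)
    then obtain y v where xv: "x = y @ [v]" by (metis length_Suc_conv_rev)
    then have "y \<noteq> []" using x(1) assms by auto
    with x xv have "y \<in> Av n" "v \<in> extensions y"
      by (auto simp: Av_def extensions_def asc_avoider_snoc)
    with x(3) xv show "x \<in> (\<Union>y\<in>Av n. ?children y)" by blast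
  qed (auto simp: Av_def extensions_def)
  moreover have "finite (?children y)" if "y \<in> Av n" for y
    using that finite_extensions by (simp add: Av_def)
  ultimately have "card {x\<in>Av (Suc n). P x} = (\<Sum>y\<in>Av n. card (?children y))"
    by (simp only:) (rule card_UN_disjoint[OF finite_Av], auto)
  also have "\<dots> = (\<Sum>y\<in>Av n. card {v\<in>extensions y. P (y @ [v])})"
    by (intro sum.cong refl card_image) (simp add: inj_on_def)
  finally show ?thesis .
qed

lemma card_positive_children:
  assumes y: "asc_avoider y" and zeros: "2 \<le> count_list y 0" and c: "2 \<le> c"
  shows "card {v\<in>extensions y. 0 < v \<and> c \<le> label (y @ [v])} = label y + 1 - c"
proof -
  define B where "B = extensions y - {0}"
  have "finite B" using finite_extensions[OF y] by (simp add: B_def)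
  have "{v\<in>extensions y. 0 < v \<and> c \<le> label (y @ [v])} = {v\<in>B. c - 2 \<le> card {u\<in>B. v < u}}"
  proof (intro set_eqI)
    fix v
    have "{u\<in>extensions y. v < u} = {u\<in>B. v < u}" by (auto simp: B_def)
    then have "v \<in> extensions y \<Longrightarrow> 0 < v \<Longrightarrow> label (y @ [v]) = card {u\<in>B. v < u} + 2"
      using label_snoc_pos[OF y zeros] by simp
    then show "v \<in> {v\<in>extensions y. 0 < v \<and> c \<le> label (y @ [v])} \<longleftrightarrow> v \<in> {v\<in>B. c - 2 \<le> card {u\<in>B. v < u}}"
      using c unfolding B_def by auto
  qed
  moreover have "card B = label y - 1"
    using zero_mem_extensions[OF y] finite_extensions[OF y] by (simp add: B_def label_def)
  ultimately show ?thesis using card_with_at_least_greater[OF \<open>finite B\<close>] label_ge_2[OF y] c by simp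
qed

lemma card_children:
  assumes y: "asc_avoider y" and k: "2 \<le> k" and c: "2 \<le> c"
  shows "card {v\<in>extensions y. count_list (y @ [v]) 0 = k \<and> c \<le> label (y @ [v])}
    = of_bool (count_list y 0 + 1 = k \<and> c \<le> label y)
      + (if count_list y 0 = k then label y + 1 - c else 0)"
proof -
  define P where "P v \<longleftrightarrow> count_list (y @ [v]) 0 = k \<and> c \<le> label (y @ [v])" for v
  have "{v\<in>extensions y. P v} = {v\<in>extensions y. v = 0 \<and> P v} \<union> {v\<in>extensions y. 0 < v \<and> P v}"
    by auto
  then have "card {v\<in>extensions y. P v}
      = card {v\<in>extensions y. v = 0 \<and> P v} + card {v\<in>extensions y. 0 < v \<and> P v}"
    using finite_extensions[OF y] by (simp only:) (rule card_Un_disjoint, auto)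
  moreover have "{v\<in>extensions y. v = 0 \<and> P v}
      = (if count_list y 0 + 1 = k \<and> c \<le> label y then {0} else {})"
    using zero_mem_extensions[OF y] extensions_snoc_0[OF y] by (auto simp: P_def label_def)
  moreover have "card {v\<in>extensions y. 0 < v \<and> P v} = (if count_list y 0 = k then label y + 1 - c else 0)"
  proof (cases "count_list y 0 = k")
    case True
    then have "{v\<in>extensions y. 0 < v \<and> P v} = {v\<in>extensions y. 0 < v \<and> c \<le> label (y @ [v])}"
      by (auto simp: P_def)
    with True show ?thesis using card_positive_children[OF y _ c] k by simp
  qed (auto simp: P_def)
  ultimately show ?thesis unfolding P_def by simp
qed

lemma card_Av_1_zeros_label:
  assumes "1 \<le> k" "2 \<le> c"
  shows "card {x\<in>Av 1. count_list x 0 = k \<and> c \<le> label x} = ballot 1 (k + c - 2)"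
proof -
  have "{x\<in>Av 1. count_list x 0 = k \<and> c \<le> label x} = (if k = 1 \<and> c = 2 then {[0]} else {})"
    unfolding Av_1 using assms by (auto simp: label_0)
  moreover have "ballot 1 (k + c - 2) = (if k = 1 \<and> c = 2 then 1 else 0)"
    using assms by (cases "k + c - 2") (auto simp: ballot.simps(3))
  ultimately show ?thesis by simp
qed

lemma card_Av_Suc_one_zero_label_eq:
  assumes "1 \<le> n"
  shows "card {x\<in>Av (Suc n). count_list x 0 = 1 \<and> c \<le> label x} = card {y\<in>Av n. max 2 (c - 1) \<le> label y}"
proof -
  have label_iff: "c \<le> label (shift y) \<longleftrightarrow> max 2 (c - 1) \<le> label y" if "y \<in> Av n" for y
  proof -
    have "asc_avoider y" using that by (simp add: Av_def)
    then have "label (shift y) = label y + 1" "2 \<le> label y" by (simp_all add: label_shift label_ge_2)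
    then show ?thesis by linarith
  qed
  have "{x\<in>Av (Suc n). count_list x 0 = 1 \<and> c \<le> label x} = {x\<in>shift ` Av n. c \<le> label x}"
    using Av_Suc_one_zero[OF assms] by blast
  also have "\<dots> = shift ` {y\<in>Av n. max 2 (c - 1) \<le> label y}"
    using label_iff by auto
  finally show ?thesis by (simp add: card_image inj_on_subset[OF inj_shift])
qed

context
  fixes n :: nat
  assumes n: "1 \<le> n"
    and IH: "\<And>k c. 1 \<le> k \<Longrightarrow> 2 \<le> c \<Longrightarrow>
      card {x\<in>Av n. count_list x 0 = k \<and> c \<le> label x} = ballot n (k + c - 2)"
begin

lemma card_Av_label_ge:
  assumes c: "2 \<le> c"
  shows "card {y\<in>Av n. c \<le> label y} = ballot (Suc n) c"
proof -
  have "card {y\<in>Av n. c \<le> label y} = (\<Sum>k=1..n. card {y\<in>{y\<in>Av n. c \<le> label y}. count_list y 0 = k})"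
  proof (rule card_eq_sum_card_fibres)
    show "(\<lambda>y. count_list y 0) ` {y\<in>Av n. c \<le> label y} \<subseteq> {1..n}"
      using count_list_0_pos count_le_length by (fastforce simp: Av_def)
  qed (simp_all add: finite_Av)
  also have "\<dots> = (\<Sum>k=1..n. ballot n (k + (c - 2)))"
  proof (rule sum.cong[OF refl])
    fix k assume "k \<in> {1..n}"
    then have "card {y\<in>Av n. count_list y 0 = k \<and> c \<le> label y} = ballot n (k + c - 2)"
      using c by (intro IH) auto
    moreover have "{y\<in>{y\<in>Av n. c \<le> label y}. count_list y 0 = k}
        = {y\<in>Av n. count_list y 0 = k \<and> c \<le> label y}" by auto
    ultimately show "card {y\<in>{y\<in>Av n. c \<le> label y}. count_list y 0 = k} = ballot n (k + (c - 2))"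
      using c by simp
  qed
  also have "\<dots> = ballot (Suc n) (c - 2 + 2)"
    by (rule sum_ballot_from_1[OF n])
  also have "c - 2 + 2 = c" using c by simp
  finally show ?thesis .
qed

lemma card_Av_Suc_one_zero_label:
  assumes c: "2 \<le> c"
  shows "card {x\<in>Av (Suc n). count_list x 0 = 1 \<and> c \<le> label x} = ballot (Suc n) (c - 1)"
proof -
  have "card {x\<in>Av (Suc n). count_list x 0 = 1 \<and> c \<le> label x} = card {y\<in>Av n. max 2 (c - 1) \<le> label y}"
    by (rule card_Av_Suc_one_zero_label_eq[OF n])
  also have "\<dots> = ballot (Suc n) (max 2 (c - 1))"
    by (rule card_Av_label_ge) simp
  also have "\<dots> = ballot (Suc n) (c - 1)"
    using ballot_Suc_1_eq_2[OF n] c by (cases "c = 2") (simp_all add: numeral_2_eq_2)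
  finally show ?thesis .
qed

lemma sum_label_excess:
  assumes k: "1 \<le> k" and c: "2 \<le> c"
  shows "(\<Sum>y\<in>{y\<in>Av n. count_list y 0 = k}. label y + 1 - c) = (\<Sum>i<n + 2. ballot n (k + c - 2 + i))"
proof -
  have "(\<Sum>y\<in>{y\<in>Av n. count_list y 0 = k}. label y + 1 - c)
      = (\<Sum>i<n + 2. card {y\<in>{y\<in>Av n. count_list y 0 = k}. c + i \<le> label y})"
  proof (rule sum_diff_eq_sum_card)
    show "finite {y\<in>Av n. count_list y 0 = k}" using finite_Av by simp
    show "\<forall>y\<in>{y\<in>Av n. count_list y 0 = k}. label y < c + (n + 2)"
      using label_le_Suc_length c by (fastforce simp: Av_def)
  qed
  also have "\<dots> = (\<Sum>i<n + 2. ballot n (k + c - 2 + i))"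
  proof (rule sum.cong[OF refl])
    fix i
    have "{y\<in>{y\<in>Av n. count_list y 0 = k}. c + i \<le> label y} = {y\<in>Av n. count_list y 0 = k \<and> c + i \<le> label y}"
      by auto
    moreover have "k + (c + i) - 2 = k + c - 2 + i" using c by simp
    ultimately show "card {y\<in>{y\<in>Av n. count_list y 0 = k}. c + i \<le> label y} = ballot n (k + c - 2 + i)"
      using IH[of k "c + i"] k c by simp
  qed
  finally show ?thesis .
qed

lemma card_Av_Suc_zeros_label:
  assumes k: "2 \<le> k" and c: "2 \<le> c"
  shows "card {x\<in>Av (Suc n). count_list x 0 = k \<and> c \<le> label x} = ballot (Suc n) (k + c - 2)"
proof -
  define d where "d = k + c - 3"
  have d: "k + c - 2 = Suc d" using k c by (simp add: d_def)
  have "card {x\<in>Av (Suc n). count_list x 0 = k \<and> c \<le> label x}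
      = (\<Sum>y\<in>Av n. card {v\<in>extensions y. count_list (y @ [v]) 0 = k \<and> c \<le> label (y @ [v])})"
    by (rule card_Av_Suc[OF n])
  also have "\<dots> = (\<Sum>y\<in>Av n. of_bool (count_list y 0 + 1 = k \<and> c \<le> label y))
      + (\<Sum>y\<in>Av n. if count_list y 0 = k then label y + 1 - c else 0)"
    unfolding sum.distrib[symmetric] using card_children k c by (intro sum.cong) (simp_all add: Av_def)
  also have "(\<Sum>y\<in>Av n. of_bool (count_list y 0 + 1 = k \<and> c \<le> label y))
      = card {y\<in>Av n. count_list y 0 = k - 1 \<and> c \<le> label y}"
    using k finite_Av by (auto simp: Int_def intro!: arg_cong[where f = card])
  also have "\<dots> = ballot n (k - 1 + c - 2)"
    using k c by (intro IH) simp_all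
  also have "k - 1 + c - 2 = d" using k c by (simp add: d_def)
  also have "(\<Sum>y\<in>Av n. if count_list y 0 = k then label y + 1 - c else 0)
      = (\<Sum>y\<in>{y\<in>Av n. count_list y 0 = k}. label y + 1 - c)"
    by (rule sum.inter_filter[OF finite_Av, symmetric])
  also have "\<dots> = (\<Sum>i<n + 2. ballot n (Suc d + i))"
    using sum_label_excess[of k c] k c unfolding d by simp
  also have "ballot n d + (\<Sum>i<n + 2. ballot n (Suc d + i)) = (\<Sum>i<Suc (n + 2). ballot n (d + i))"
    by (simp only: sum.lessThan_Suc_shift) simp
  also have "\<dots> = ballot (Suc n) (k + c - 2)"
    using sum_ballot_tail[of n "Suc (n + 2)" d] d by simp
  finally show ?thesis .
qed

end

text \<open>For c = 2 this counts sequences by zeros alone; the label threshold c is what makes the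
  induction go through.\<close>

lemma card_Av_zeros_label:
  assumes "1 \<le> n" "1 \<le> k" "2 \<le> c"
  shows "card {x\<in>Av n. count_list x 0 = k \<and> c \<le> label x} = ballot n (k + c - 2)"
  using assms
proof (induction n arbitrary: k c rule: nat_induct_at_least)
  case base
  then show ?case by (rule card_Av_1_zeros_label)
next
  case (Suc n)
  show ?case
  proof (cases "k = 1")
    case True
    with Suc show ?thesis using card_Av_Suc_one_zero_label[of n c] by simp
  next
    case False
    with Suc show ?thesis using card_Av_Suc_zeros_label[of n k c] by simp
  qed
qed

theorem mainTheorem7:
  fixes n :: nat
  assumes "n \<ge> 1"
  shows "(\<exists>f. bij_betw f (S n {[0,0,1,1], [0,0,2,1]}) (dyck n) \<and>
            (\<forall>xs\<in>S n {[0,0,1,1], [0,0,2,1]}. returns (f xs) = count_list xs 0))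
         \<and> (\<forall>k\<ge>1. card {xs\<in>S n {[0,0,1,1], [0,0,2,1]}. count_list xs 0 = k}
                   = card {p\<in>dyck n. returns p = k})
         \<and> card (S n {[0,0,1,1], [0,0,2,1]}) = catalan n"
proof -
  have fibres: "card {x\<in>Av n. count_list x 0 = k} = card {p\<in>dyck n. returns p = k}" for k
  proof (cases "k = 0")
    case True
    then have "{x\<in>Av n. count_list x 0 = k} = {}" using count_list_0_pos by (auto simp: Av_def)
    then have "card {x\<in>Av n. count_list x 0 = k} = 0" by (simp only: card.empty)
    moreover have "ballot n 0 = 0" using assms by (cases n) simp_all
    ultimately show ?thesis using True by (simp add: card_dyck_returns)
  next
    case False
    then have "{x\<in>Av n. count_list x 0 = k} = {x\<in>Av n. count_list x 0 = k \<and> 2 \<le> label x}"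
      using label_ge_2 by (auto simp: Av_def)
    with False assms show ?thesis by (simp add: card_Av_zeros_label card_dyck_returns)
  qed
  obtain f where f: "bij_betw f (Av n) (dyck n)" "\<forall>x\<in>Av n. returns (f x) = count_list x 0"
    using ex_bij_betw_preserving_statistic[OF finite_Av finite_dyck fibres] by blast
  then have "card (Av n) = catalan n" using bij_betw_same_card card_dyck by metis
  with f fibres show ?thesis unfolding S_0011_0021_eq_Av by blast
qed

end
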